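(* Let $f=\frac1{1-X}\in GF(2)[[X]]$, and for $h\in GF(2)[[X]]$ let $\alpha[h]:g\mapsto h+g$ and $\mu[h]:g\mapsto hg$. Let $\Gamma$ be the group of bijections of $GF(2)[[X]]$ generated by the maps $g\mapsto f\cdot(s+g)$, $s\in\{0,1\}$, and let $N$ be the subgroup generated by $\{\alpha[sf^m]\mid s\in GF(2),\ m\in\mathbb{Z}\}$. Then $N$ is a normal subgroup of $\Gamma$.
   Context: Under the identification of $\{0,1\}^\omega$ with $GF(2)[[X]]$ via $(a_k)\mapsto\sum a_kX^k$, $\Gamma$ is the automaton group $\Gamma(\mathcal{M}_2)$ of the two-state Mealy machine over $\{0,1\}$ in which state $s$, reading $r$, outputs $s+r\bmod 2$ and moves to state $s+r\bmod 2$. *)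

theory Defs
  imports "HOL-Library.Z2" "HOL-Computational_Algebra.Formal_Power_Series" "HOL-Algebra.Bij" "HOL-Algebra.Generated_Groups"
begin

type_synonym gf2fps = "bit fps"

definition fM :: gf2fps where "fM = inverse (1 - fps_X)"

definition fpow :: "int \<Rightarrow> gf2fps" where
  "fpow m = (if 0 \<le> m then fM ^ nat m else (1 - fps_X) ^ nat (- m))"

definition alphaM :: "gf2fps \<Rightarrow> gf2fps \<Rightarrow> gf2fps" where "alphaM h = (\<lambda>g. h + g)"
definition muM :: "gf2fps \<Rightarrow> gf2fps \<Rightarrow> gf2fps" where "muM h = (\<lambda>g. h * g)"

definition GammaGens :: "(gf2fps \<Rightarrow> gf2fps) set" where
  "GammaGens = {(\<lambda>g. fM * (fps_const s + g)) | s :: bit. True}"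

definition Gamma :: "(gf2fps \<Rightarrow> gf2fps) set" where
  "Gamma = generate (BijGroup (UNIV :: gf2fps set)) GammaGens"

definition NGens :: "(gf2fps \<Rightarrow> gf2fps) set" where
  "NGens = {alphaM (fps_const s * fpow m) | (s :: bit) (m :: int). True}"

definition NSub :: "(gf2fps \<Rightarrow> gf2fps) set" where
  "NSub = generate (BijGroup (UNIV :: gf2fps set)) NGens"

end

theory Submission
  imports Defs
begin

text \<open>Each generator \<open>\<tau>\<^sub>s: g \<mapsto> f (s + g)\<close> of \<open>\<Gamma>\<close> is affine with linear part \<open>\<mu>[f]\<close>, so
  \<open>\<tau>\<^sub>s \<circ> \<alpha>[h] = \<alpha>[f h] \<circ> \<tau>\<^sub>s\<close>: conjugation by \<open>\<tau>\<^sub>s\<^sup>\<plusminus>\<^sup>1\<close> turns \<open>\<alpha>[s f\<^sup>m]\<close> into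
  \<open>\<alpha>[s f\<^sup>m\<^sup>\<plusminus>\<^sup>1]\<close> and so permutes the generators of \<open>N\<close>. Moreover \<open>\<alpha>[s f] = \<tau>\<^sub>s \<tau>\<^sub>0\<^sup>-\<^sup>1\<close>,
  whence \<open>N \<subseteq> \<Gamma>\<close>. A subgroup whose generators are mapped into it by conjugation with the
  generators of \<open>\<Gamma>\<close> and their inverses is normal in \<open>\<Gamma>\<close>.\<close>

lemma (in group) conjugate_generate_closed:
  assumes c: "c \<in> carrier G" and K: "K \<subseteq> carrier G"
    and conj_K: "\<And>k. k \<in> K \<Longrightarrow> c \<otimes> k \<otimes> inv c \<in> generate G K"
    and h: "h \<in> generate G K"
  shows "c \<otimes> h \<otimes> inv c \<in> generate G K"
proof -
  let ?conj = "\<lambda>x. c \<otimes> x \<otimes> inv c"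
  interpret conj: group_hom G G ?conj
    using c by unfold_locales (auto intro!: homI simp: m_assoc inv_solve_left)
  have "?conj ` generate G K = generate G (?conj ` K)"
    using conj.generate_img[OF K] by (rule sym)
  also have "\<dots> \<subseteq> generate G K"
    using conj_K by (intro generate_subgroup_incl generate_is_subgroup K) auto
  finally show ?thesis
    using h by blast
qed

lemma (in group) generate_normal_in_generate:
  assumes S: "S \<subseteq> carrier G" and K: "K \<subseteq> generate G S"
    and conj: "\<And>s k. s \<in> S \<Longrightarrow> k \<in> K \<Longrightarrow> s \<otimes> k \<otimes> inv s \<in> generate G K"
    and inv_conj: "\<And>s k. s \<in> S \<Longrightarrow> k \<in> K \<Longrightarrow> inv s \<otimes> k \<otimes> s \<in> generate G K"
  shows "generate G K \<lhd> G\<lparr>carrier := generate G S\<rparr>"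
proof -
  let ?N = "generate G K"
  have K_carrier: "K \<subseteq> carrier G"
    using K generate_incl[OF S] by blast
  have N_sub: "subgroup ?N G" and H_sub: "subgroup (generate G S) G"
    using generate_is_subgroup K_carrier S by auto
  define C where "C = {g \<in> carrier G. \<forall>h \<in> ?N. g \<otimes> h \<otimes> inv g \<in> ?N \<and> inv g \<otimes> h \<otimes> g \<in> ?N}"
  have "subgroup C G"
  proof (rule subgroupI)
    show "C \<noteq> {}"
      using generate_in_carrier[OF K_carrier] by (auto simp: C_def)
    show "inv g \<in> C" if "g \<in> C" for g
      using that by (auto simp: C_def)
    show "g1 \<otimes> g2 \<in> C" if g1: "g1 \<in> C" and g2: "g2 \<in> C" for g1 g2
    proof -
      have "(g1 \<otimes> g2) \<otimes> h \<otimes> inv (g1 \<otimes> g2) = g1 \<otimes> (g2 \<otimes> h \<otimes> inv g2) \<otimes> inv g1"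
        and "inv (g1 \<otimes> g2) \<otimes> h \<otimes> (g1 \<otimes> g2) = inv g2 \<otimes> (inv g1 \<otimes> h \<otimes> g1) \<otimes> g2"
        if "h \<in> ?N" for h
        using that g1 g2 generate_in_carrier[OF K_carrier]
        by (auto simp: C_def m_assoc inv_mult_group)
      then show ?thesis
        using g1 g2 by (simp add: C_def)
    qed
  qed (auto simp: C_def)
  moreover have "S \<subseteq> C"
  proof
    fix s assume s: "s \<in> S"
    then have "s \<in> carrier G"
      using S by blast
    then show "s \<in> C"
      using conjugate_generate_closed[of s K] conjugate_generate_closed[of "inv s" K]
        conj[OF s] inv_conj[OF s] K_carrier by (auto simp: C_def)
  qed
  ultimately have H_C: "generate G S \<subseteq> C"
    by (intro generate_subgroup_incl)
  interpret H: group "G\<lparr>carrier := generate G S\<rparr>"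
    using H_sub by (rule subgroup_imp_group)
  show ?thesis
    unfolding H.normal_inv_iff
  proof (intro conjI ballI)
    show "subgroup ?N (G\<lparr>carrier := generate G S\<rparr>)"
      using N_sub H_sub generate_subgroup_incl[OF K H_sub] by (rule subgroup_incl)
    fix x h assume "x \<in> carrier (G\<lparr>carrier := generate G S\<rparr>)" and "h \<in> ?N"
    then show "x \<otimes>\<^bsub>G\<lparr>carrier := generate G S\<rparr>\<^esub> h \<otimes>\<^bsub>G\<lparr>carrier := generate G S\<rparr>\<^esub>
        inv\<^bsub>G\<lparr>carrier := generate G S\<rparr>\<^esub> x \<in> ?N"
      using H_C m_inv_consistent[OF H_sub] by (auto simp: C_def)
  qed
qed

lemma carrier_BijGroup_UNIV: "carrier (BijGroup (UNIV :: 'a set)) = Collect bij"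
  by (simp add: BijGroup_def Bij_def)

lemma mult_BijGroup_UNIV:
  "bij f \<Longrightarrow> bij g \<Longrightarrow> f \<otimes>\<^bsub>BijGroup (UNIV :: 'a set)\<^esub> g = f \<circ> g"
  by (simp add: BijGroup_def Bij_def compose_def o_def restrict_UNIV)

lemma (in group) conjugate_eq_if_intertwines:
  assumes "x \<in> carrier G" "y \<in> carrier G" "z \<in> carrier G" and "x \<otimes> y = z \<otimes> x"
  shows "x \<otimes> y \<otimes> inv x = z" and "inv x \<otimes> z \<otimes> x = y"
  using assms by (simp_all add: inv_solve_right' inv_solve_left' m_assoc)

abbreviation BijG :: "(gf2fps \<Rightarrow> gf2fps) monoid" where
  "BijG \<equiv> BijGroup UNIV"

definition tauM :: "bit \<Rightarrow> gf2fps \<Rightarrow> gf2fps" where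
  "tauM s = (\<lambda>g. fM * (fps_const s + g))"

lemma fM_mult_one_minus_X: "fM * (1 - fps_X) = 1"
  unfolding fM_def by (rule inverse_mult_eq_1) simp

lemma fpow_succ: "fpow (m + 1) = fM * fpow m"
proof (cases "0 \<le> m")
  case True
  then have "nat (m + 1) = Suc (nat m)"
    by simp
  then show ?thesis
    using True by (simp add: fpow_def)
next
  case False
  then have "fpow (m + 1) = (1 - fps_X) ^ nat (- (m + 1))"
    by (cases "m = -1") (simp_all add: fpow_def)
  moreover have "nat (- m) = Suc (nat (- (m + 1)))"
    using False by simp
  ultimately show ?thesis
    using False by (simp add: fpow_def mult.assoc[symmetric] fM_mult_one_minus_X)
qed

lemma bij_alphaM: "bij (alphaM h)"
  by (rule o_bij[of "alphaM (- h)"]) (auto simp: alphaM_def)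

lemma bij_tauM: "bij (tauM s)"
proof (rule o_bij[of "\<lambda>g. (1 - fps_X) * g - fps_const s"])
  have "(1 - fps_X) * fM = 1"
    using fM_mult_one_minus_X by (simp add: mult.commute)
  then show "tauM s \<circ> (\<lambda>g. (1 - fps_X) * g - fps_const s) = id"
    and "(\<lambda>g. (1 - fps_X) * g - fps_const s) \<circ> tauM s = id"
    by (simp_all add: tauM_def fun_eq_iff mult.assoc[symmetric] fM_mult_one_minus_X)
qed

lemma alphaM_in_carrier: "alphaM h \<in> carrier BijG"
  by (simp add: carrier_BijGroup_UNIV bij_alphaM)

lemma tauM_in_carrier: "tauM s \<in> carrier BijG"
  by (simp add: carrier_BijGroup_UNIV bij_tauM)

lemma tauM_comp_alphaM: "tauM s \<circ> alphaM h = alphaM (fM * h) \<circ> tauM s"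
  by (auto simp: tauM_def alphaM_def algebra_simps)

lemma tauM_eq_alphaM_comp_tauM_0: "tauM s = alphaM (fps_const s * fM) \<circ> tauM 0"
  by (auto simp: tauM_def alphaM_def algebra_simps)

lemma tauM_conj_alphaM_fpow:
  "tauM s \<otimes>\<^bsub>BijG\<^esub> alphaM (fps_const c * fpow m) \<otimes>\<^bsub>BijG\<^esub> inv\<^bsub>BijG\<^esub> tauM s
     = alphaM (fps_const c * fpow (m + 1))"
  and tauM_inv_conj_alphaM_fpow:
  "inv\<^bsub>BijG\<^esub> tauM s \<otimes>\<^bsub>BijG\<^esub> alphaM (fps_const c * fpow (m + 1)) \<otimes>\<^bsub>BijG\<^esub> tauM s
     = alphaM (fps_const c * fpow m)"
proof -
  have intertwine: "tauM s \<otimes>\<^bsub>BijG\<^esub> alphaM (fps_const c * fpow m)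
      = alphaM (fps_const c * fpow (m + 1)) \<otimes>\<^bsub>BijG\<^esub> tauM s"
    by (simp add: mult_BijGroup_UNIV bij_tauM bij_alphaM tauM_comp_alphaM fpow_succ mult.left_commute)
  note conjugate_eq = group.conjugate_eq_if_intertwines[OF group_BijGroup _ _ _ intertwine]
  show "tauM s \<otimes>\<^bsub>BijG\<^esub> alphaM (fps_const c * fpow m) \<otimes>\<^bsub>BijG\<^esub> inv\<^bsub>BijG\<^esub> tauM s
      = alphaM (fps_const c * fpow (m + 1))"
    and "inv\<^bsub>BijG\<^esub> tauM s \<otimes>\<^bsub>BijG\<^esub> alphaM (fps_const c * fpow (m + 1)) \<otimes>\<^bsub>BijG\<^esub> tauM s
      = alphaM (fps_const c * fpow m)"
    by (rule conjugate_eq; rule tauM_in_carrier alphaM_in_carrier)+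
qed

lemma GammaGens_eq_range_tauM: "GammaGens = range tauM"
  by (auto simp: GammaGens_def tauM_def)

lemma subgroup_Gamma: "subgroup Gamma BijG"
  unfolding Gamma_def GammaGens_eq_range_tauM
  by (intro group.generate_is_subgroup group_BijGroup) (auto simp: tauM_in_carrier)

lemma tauM_in_Gamma: "tauM s \<in> Gamma"
  unfolding Gamma_def GammaGens_eq_range_tauM by (rule generate.incl) simp

lemma alphaM_const_mult_fM_eq: "alphaM (fps_const s * fM) = tauM s \<otimes>\<^bsub>BijG\<^esub> inv\<^bsub>BijG\<^esub> tauM 0"
proof -
  have "tauM s = alphaM (fps_const s * fM) \<otimes>\<^bsub>BijG\<^esub> tauM 0"
    using tauM_eq_alphaM_comp_tauM_0[of s] by (simp add: mult_BijGroup_UNIV bij_tauM bij_alphaM)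
  then show ?thesis
    using group.inv_solve_right[OF group_BijGroup alphaM_in_carrier tauM_in_carrier tauM_in_carrier]
    by blast
qed

lemma alphaM_fpow_in_Gamma: "alphaM (fps_const c * fpow m) \<in> Gamma"
proof (induction m rule: int_induct[where k = 1])
  case base
  have "fpow 1 = fM"
    using fpow_succ[of 0] by (simp add: fpow_def)
  then show ?case
    using alphaM_const_mult_fM_eq tauM_in_Gamma subgroup.m_closed[OF subgroup_Gamma]
      subgroup.m_inv_closed[OF subgroup_Gamma] by simp
next
  case (step1 i)
  then show ?case
    using tauM_conj_alphaM_fpow[of 0 c i] tauM_in_Gamma subgroup.m_closed[OF subgroup_Gamma]
      subgroup.m_inv_closed[OF subgroup_Gamma] by metis
next
  case (step2 i)
  then show ?case
    using tauM_inv_conj_alphaM_fpow[of 0 c "i - 1"] tauM_in_Gamma subgroup.m_closed[OF subgroup_Gamma]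
      subgroup.m_inv_closed[OF subgroup_Gamma] by (metis diff_add_cancel)
qed

theorem proposition8p11:
  shows "NSub \<lhd> (BijGroup (UNIV :: gf2fps set))\<lparr>carrier := Gamma\<rparr>"
  unfolding NSub_def Gamma_def
proof (rule group.generate_normal_in_generate[OF group_BijGroup])
  show "GammaGens \<subseteq> carrier BijG"
    by (auto simp: GammaGens_eq_range_tauM tauM_in_carrier)
  show "NGens \<subseteq> generate BijG GammaGens"
    using alphaM_fpow_in_Gamma by (auto simp: NGens_def Gamma_def)
next
  fix s k assume "s \<in> GammaGens" and "k \<in> NGens"
  then obtain t c m where s: "s = tauM t" and k: "k = alphaM (fps_const c * fpow m)"
    by (auto simp: GammaGens_eq_range_tauM NGens_def)
  have "alphaM (fps_const c * fpow (m + 1)) \<in> NGens" and "alphaM (fps_const c * fpow (m - 1)) \<in> NGens"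
    by (auto simp: NGens_def)
  then show "s \<otimes>\<^bsub>BijG\<^esub> k \<otimes>\<^bsub>BijG\<^esub> inv\<^bsub>BijG\<^esub> s \<in> generate BijG NGens"
    and "inv\<^bsub>BijG\<^esub> s \<otimes>\<^bsub>BijG\<^esub> k \<otimes>\<^bsub>BijG\<^esub> s \<in> generate BijG NGens"
    using tauM_conj_alphaM_fpow[of t c m] tauM_inv_conj_alphaM_fpow[of t c "m - 1"]
    by (auto simp: s k intro: generate.incl)
qed

end
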